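(* Let $K$ be a commutative field, let $q\in K$, and let $\mathcal{H}_{\mathcal{PP}}$ be the $K$-vector space with basis the set $\mathcal{PP}$ of isomorphism classes of plane posets. Define $\Delta_q:\mathcal{H}_{\mathcal{PP}}\to\mathcal{H}_{\mathcal{PP}}\otimes\mathcal{H}_{\mathcal{PP}}$ linearly by $$\Delta_q(P)=\sum_{I \text{ biideal of } P} q^{h(P\setminus I,\,I)}\,(P\setminus I)\otimes I,\qquad h(A,B)=\sharp\{(x,y)\in A\times B\mid x<_h y\},$$ for every plane poset $P$ (with the convention $q^0=1$). Then $\Delta_q$ is coassociative, i.e. $(\Delta_q\otimes \mathrm{Id})\circ\Delta_q=(\mathrm{Id}\otimes\Delta_q)\circ\Delta_q$, and for all plane posets $x,y$, writing $\Delta_q(x)=\sum x^{(1)}\otimes x^{(2)}$ and $\Delta_q(y)=\sum y^{(1)}\otimes y^{(2)}$ as sums of scalar multiples of tensors of plane posets, and $|\cdot|$ for cardinality: $$\Delta_q(xy)=\sum x^{(1)}\otimes x^{(2)}y+\sum xy^{(1)}\otimes y^{(2)}-x\otimes y,$$ $$\Delta_q(x\triangleleft y)=\sum q^{|x^{(1)}||y|}\,x^{(1)}\otimes x^{(2)}\triangleleft y+\sum q^{|x||y^{(2)}|}\,x\triangleleft y^{(1)}\otimes y^{(2)}-q^{|x||y|}\,x\otimes y.$$ Hence $(\mathcal{H}_{\mathcal{PP}},m,\Delta_q)$ is an infinitesimal Hopf algebra for every $q$, as well as $(\mathcal{H}_{\mathcal{PP}},\triangleleft,\Delta_1)$, where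 an infinitesimal Hopf algebra is an associative unital algebra with a coassociative coproduct $\Delta$ satisfying $\Delta(ab)=\Delta(a)(1\otimes b)+(a\otimes 1)\Delta(b)-a\otimes b$.
   Context: A plane poset is a finite set $P$ with two partial orders $\leq_h$ and $\leq_r$ such that for all $x\neq y$ in $P$, $x$ and $y$ are comparable for $\leq_h$ if and only if they are not comparable for $\leq_r$. Plane posets are considered up to isomorphism (bijections preserving both orders); the empty plane poset is denoted $1$. A subset of a plane poset, with the restricted orders, is again a plane poset (a plane subposet). A subset $I\subseteq P$ is a biideal of $P$ if for all $x,y\in P$, ($x\in I$ and $x\leq_h y$) implies $y\in I$, and ($x\in I$ and $x\leq_r y$) implies $y\in I$. For plane posets $P,Q$: the product $PQ$ (denoted $m$) is the plane poset on $P\sqcup Q$ in which $P,Q$ are plane subposets, no element of $P$ is $\leq_h$-comparable with an element of $Q$, and $x<_r y$ for all $x\in P$, $y\in Q$; the product $P\triangleleft Q$ is the plane poset on $P\sqcup Q$ in which $P,Q$ are plane subposets, no element of $P$ is $\leq_r$-comparable with an element of $Q$, and $x<_h y$ for all $x\in P,y\in Q$. Both products are extended bilinearly to $\mathcal{H}_{\mathcal{PP}}$; they are associative with unit $1$. *)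

theory Defs
  imports Main "HOL-Library.Poly_Mapping"
begin

text \<open>A concrete plane poset is a triple (A, H, R): a finite carrier A of naturals
  and the relations of the two partial orders (reflexive, as sets of pairs).\<close>

type_synonym ppraw = "nat set \<times> (nat \<times> nat) set \<times> (nat \<times> nat) set"

definition is_pp :: "ppraw \<Rightarrow> bool" where
  "is_pp P = (case P of (A, H, R) \<Rightarrow>
     finite A \<and> partial_order_on A H \<and> partial_order_on A R \<and>
     (\<forall>x\<in>A. \<forall>y\<in>A. x \<noteq> y \<longrightarrow>
        (((x, y) \<in> H \<or> (y, x) \<in> H) \<longleftrightarrow> \<not> ((x, y) \<in> R \<or> (y, x) \<in> R))))"

definition pp_iso :: "ppraw \<Rightarrow> ppraw \<Rightarrow> bool" where
  "pp_iso P Q = (case P of (A, H, R) \<Rightarrow> case Q of (B, H', R') \<Rightarrow>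
     (\<exists>f. bij_betw f A B \<and>
        (\<forall>x\<in>A. \<forall>y\<in>A. ((x, y) \<in> H \<longleftrightarrow> (f x, f y) \<in> H') \<and>
                       ((x, y) \<in> R \<longleftrightarrow> (f x, f y) \<in> R'))))"

type_synonym ppc = "ppraw set"

definition pp_class :: "ppraw \<Rightarrow> ppc" where
  "pp_class P = {Q. is_pp Q \<and> pp_iso P Q}"

definition PP :: "ppc set" where
  "PP = {pp_class P | P. is_pp P}"

definition pp_rep :: "ppc \<Rightarrow> ppraw" where
  "pp_rep c = (SOME P. P \<in> c)"

definition pp_card :: "ppc \<Rightarrow> nat" where
  "pp_card c = card (fst (pp_rep c))"

definition pp_restrict :: "ppraw \<Rightarrow> nat set \<Rightarrow> ppraw" where
  "pp_restrict P S = (case P of (A, H, R) \<Rightarrow> (S, H \<inter> (S \<times> S), R \<inter> (S \<times> S)))"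

definition biideal :: "ppraw \<Rightarrow> nat set \<Rightarrow> bool" where
  "biideal P I = (case P of (A, H, R) \<Rightarrow> I \<subseteq> A \<and>
     (\<forall>x y. (x \<in> I \<and> (x, y) \<in> H \<longrightarrow> y \<in> I) \<and> (x \<in> I \<and> (x, y) \<in> R \<longrightarrow> y \<in> I)))"

definition hcount :: "ppraw \<Rightarrow> nat set \<Rightarrow> nat set \<Rightarrow> nat" where
  "hcount P X Y = (case P of (A, H, R) \<Rightarrow> card {(x, y). x \<in> X \<and> y \<in> Y \<and> (x, y) \<in> H \<and> x \<noteq> y})"

section \<open>The two products (disjoint union encoded by even / odd naturals)\<close>

definition encl :: "nat \<Rightarrow> nat" where "encl a = 2 * a"
definition encr :: "nat \<Rightarrow> nat" where "encr b = 2 * b + 1"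

definition pp_m_raw :: "ppraw \<Rightarrow> ppraw \<Rightarrow> ppraw" where
  "pp_m_raw P Q = (case P of (A, H, R) \<Rightarrow> case Q of (B, H', R') \<Rightarrow>
     (encl ` A \<union> encr ` B,
      map_prod encl encl ` H \<union> map_prod encr encr ` H',
      map_prod encl encl ` R \<union> map_prod encr encr ` R' \<union> (encl ` A \<times> encr ` B)))"

definition pp_tri_raw :: "ppraw \<Rightarrow> ppraw \<Rightarrow> ppraw" where
  "pp_tri_raw P Q = (case P of (A, H, R) \<Rightarrow> case Q of (B, H', R') \<Rightarrow>
     (encl ` A \<union> encr ` B,
      map_prod encl encl ` H \<union> map_prod encr encr ` H' \<union> (encl ` A \<times> encr ` B),
      map_prod encl encl ` R \<union> map_prod encr encr ` R'))"

definition pp_m :: "ppc \<Rightarrow> ppc \<Rightarrow> ppc" where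
  "pp_m x y = pp_class (pp_m_raw (pp_rep x) (pp_rep y))"

definition pp_tri :: "ppc \<Rightarrow> ppc \<Rightarrow> ppc" where
  "pp_tri x y = pp_class (pp_tri_raw (pp_rep x) (pp_rep y))"

definition delta_raw :: "'k::field \<Rightarrow> ppraw \<Rightarrow> (ppc \<times> ppc) \<Rightarrow>\<^sub>0 'k" where
  "delta_raw q P = (\<Sum>I \<in> {I. biideal P I}.
      Poly_Mapping.single (pp_class (pp_restrict P (fst P - I)), pp_class (pp_restrict P I))
        (q ^ hcount P (fst P - I) I))"

definition delta :: "'k::field \<Rightarrow> ppc \<Rightarrow> (ppc \<times> ppc) \<Rightarrow>\<^sub>0 'k" where
  "delta q x = delta_raw q (pp_rep x)"

definition delta_lin :: "'k::field \<Rightarrow> (ppc \<Rightarrow>\<^sub>0 'k) \<Rightarrow> (ppc \<times> ppc) \<Rightarrow>\<^sub>0 'k" where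
  "delta_lin q v = (\<Sum>a \<in> Poly_Mapping.keys v. Poly_Mapping.map (\<lambda>c. Poly_Mapping.lookup v a * c) (delta q a))"

definition delta_tensor_id ::
  "(ppc \<Rightarrow> ((ppc \<times> ppc) \<Rightarrow>\<^sub>0 'k::field)) \<Rightarrow> ((ppc \<times> ppc) \<Rightarrow>\<^sub>0 'k) \<Rightarrow> ((ppc \<times> ppc) \<times> ppc) \<Rightarrow>\<^sub>0 'k" where
  "delta_tensor_id D t = (\<Sum>p \<in> Poly_Mapping.keys t. \<Sum>r \<in> Poly_Mapping.keys (D (fst p)).
      Poly_Mapping.single ((fst r, snd r), snd p) (Poly_Mapping.lookup t p * Poly_Mapping.lookup (D (fst p)) r))"

definition id_tensor_delta ::
  "(ppc \<Rightarrow> ((ppc \<times> ppc) \<Rightarrow>\<^sub>0 'k::field)) \<Rightarrow> ((ppc \<times> ppc) \<Rightarrow>\<^sub>0 'k) \<Rightarrow> ((ppc \<times> ppc) \<times> ppc) \<Rightarrow>\<^sub>0 'k" where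
  "id_tensor_delta D t = (\<Sum>p \<in> Poly_Mapping.keys t. \<Sum>r \<in> Poly_Mapping.keys (D (snd p)).
      Poly_Mapping.single ((fst p, fst r), snd r) (Poly_Mapping.lookup t p * Poly_Mapping.lookup (D (snd p)) r))"

definition tens_rmul ::
  "(ppc \<Rightarrow> ppc \<Rightarrow> 'k::field) \<Rightarrow> (ppc \<Rightarrow> ppc \<Rightarrow> ppc) \<Rightarrow> ((ppc \<times> ppc) \<Rightarrow>\<^sub>0 'k) \<Rightarrow> ppc \<Rightarrow> (ppc \<times> ppc) \<Rightarrow>\<^sub>0 'k" where
  "tens_rmul c mul t y = (\<Sum>p \<in> Poly_Mapping.keys t.
      Poly_Mapping.single (fst p, mul (snd p) y) (c (fst p) (snd p) * Poly_Mapping.lookup t p))"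

definition tens_lmul ::
  "(ppc \<Rightarrow> ppc \<Rightarrow> 'k::field) \<Rightarrow> (ppc \<Rightarrow> ppc \<Rightarrow> ppc) \<Rightarrow> ppc \<Rightarrow> ((ppc \<times> ppc) \<Rightarrow>\<^sub>0 'k) \<Rightarrow> (ppc \<times> ppc) \<Rightarrow>\<^sub>0 'k" where
  "tens_lmul c mul x t = (\<Sum>p \<in> Poly_Mapping.keys t.
      Poly_Mapping.single (mul x (fst p), snd p) (c (fst p) (snd p) * Poly_Mapping.lookup t p))"

end

theory Submission
  imports Defs
begin

text \<open>
  Both iterated coproducts of a plane poset \<open>P\<close> expand into sums over the decompositions
  \<open>P = X \<union> Y \<union> Z\<close> in which \<open>Z\<close> and \<open>Y \<union> Z\<close> are biideals, with weight
  \<open>q ^ (h(X,Y) + h(X,Z) + h(Y,Z))\<close>: \<open>(\<Delta> \<otimes> Id) \<Delta>\<close> first cuts off the biideal \<open>Z\<close> and then \<open>Y\<close>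
  from the rest, \<open>(Id \<otimes> \<Delta>) \<Delta>\<close> first cuts off \<open>Y \<union> Z\<close> and then \<open>Z\<close> from it, and
  \<open>(I, J) \<mapsto> (I \<union> J, I)\<close> matches the two parametrisations.

  Both products are disjoint unions of \<open>P\<close> and \<open>Q\<close> in which every element of \<open>P\<close> lies below
  every element of \<open>Q\<close>, for \<open>\<le>\<^sub>r\<close> in \<open>PQ\<close> and for \<open>\<le>\<^sub>h\<close> in \<open>P \<triangleleft> Q\<close>. Hence a biideal
  of the product is either \<open>I \<union> Q\<close> with \<open>I\<close> a biideal of \<open>P\<close>, or a biideal \<open>J\<close> of \<open>Q\<close>; the
  two families share only \<open>Q\<close>, which gives the subtracted term. In \<open>P \<triangleleft> Q\<close> the new
  horizontal pairs add \<open>|P - I| |Q|\<close>, respectively \<open>|P| |J|\<close>, to \<open>h\<close>.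
\<close>

lemma sum_keys_sum_single:
  fixes F :: "'a \<Rightarrow> 'b::comm_monoid_add \<Rightarrow> 'c::ab_group_add"
  assumes add: "\<And>k a b. F k (a + b) = F k a + F k b" and "finite S"
  shows "(\<Sum>p\<in>Poly_Mapping.keys (\<Sum>i\<in>S. Poly_Mapping.single (k i) (w i)).
            F p (Poly_Mapping.lookup (\<Sum>i\<in>S. Poly_Mapping.single (k i) (w i)) p))
         = (\<Sum>i\<in>S. F (k i) (w i))"
  using \<open>finite S\<close>
proof induction
  case (insert i S)
  have zero: "F p 0 = 0" for p
    using add[of p 0 0] by simp
  let ?t = "\<Sum>i\<in>S. Poly_Mapping.single (k i) (w i)"
  have "(\<Sum>p\<in>Poly_Mapping.keys (Poly_Mapping.single (k i) (w i) + ?t).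
          F p (Poly_Mapping.lookup (Poly_Mapping.single (k i) (w i) + ?t) p))
      = (\<Sum>p\<in>Poly_Mapping.keys (Poly_Mapping.single (k i) (w i)).
          F p (Poly_Mapping.lookup (Poly_Mapping.single (k i) (w i)) p))
      + (\<Sum>p\<in>Poly_Mapping.keys ?t. F p (Poly_Mapping.lookup ?t p))"
    by (rule setsum_keys_plus_distrib) (simp_all add: zero add)
  also have "\<dots> = F (k i) (w i) + (\<Sum>i\<in>S. F (k i) (w i))"
    using insert.IH by (simp add: zero)
  finally show ?case
    using insert.hyps by simp
qed simp

lemma map_eq_sum_single:
  assumes "f 0 = 0"
  shows "Poly_Mapping.map f t
       = (\<Sum>p\<in>Poly_Mapping.keys t. Poly_Mapping.single p (f (Poly_Mapping.lookup t p)))"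
  by (rule poly_mapping_eqI)
     (simp add: map.rep_eq assms lookup_sum lookup_single when_def in_keys_iff sum.delta'
       split: if_splits)

lemma map_mult_sum_single:
  assumes "finite S"
  shows "Poly_Mapping.map (\<lambda>c. s * c) (\<Sum>i\<in>S. Poly_Mapping.single (k i) (w i))
       = (\<Sum>i\<in>S. Poly_Mapping.single (k i) (s * w i :: 'k::ring))"
  unfolding map_eq_sum_single[where f = "\<lambda>c. s * c", OF mult_zero_right]
  by (rule sum_keys_sum_single[OF _ assms]) (simp add: distrib_left single_add)

lemma sum_keys_single_mult:
  assumes "finite S"
  shows "(\<Sum>r\<in>Poly_Mapping.keys (\<Sum>i\<in>S. Poly_Mapping.single (k i) (w i)).
            Poly_Mapping.single (g r) (s * Poly_Mapping.lookup (\<Sum>i\<in>S. Poly_Mapping.single (k i) (w i)) r))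
       = (\<Sum>i\<in>S. Poly_Mapping.single (g (k i)) (s * w i :: 'k::ring))"
  by (rule sum_keys_sum_single[OF _ assms]) (simp add: distrib_left single_add)

lemma tens_rmul_sum_single:
  assumes "finite S"
  shows "tens_rmul c mul (\<Sum>i\<in>S. Poly_Mapping.single (k i) (w i)) y
       = (\<Sum>i\<in>S. Poly_Mapping.single (fst (k i), mul (snd (k i)) y) (c (fst (k i)) (snd (k i)) * w i))"
  unfolding tens_rmul_def by (rule sum_keys_sum_single[OF _ assms]) (simp add: distrib_left single_add)

lemma tens_lmul_sum_single:
  assumes "finite S"
  shows "tens_lmul c mul x (\<Sum>i\<in>S. Poly_Mapping.single (k i) (w i))
       = (\<Sum>i\<in>S. Poly_Mapping.single (mul x (fst (k i)), snd (k i)) (c (fst (k i)) (snd (k i)) * w i))"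
  unfolding tens_lmul_def by (rule sum_keys_sum_single[OF _ assms]) (simp add: distrib_left single_add)

lemma delta_tensor_id_add: "delta_tensor_id D (s + t) = delta_tensor_id D s + delta_tensor_id D t"
  unfolding delta_tensor_id_def
  by (rule setsum_keys_plus_distrib) (simp_all add: distrib_right single_add sum.distrib)

lemma id_tensor_delta_add: "id_tensor_delta D (s + t) = id_tensor_delta D s + id_tensor_delta D t"
  unfolding id_tensor_delta_def
  by (rule setsum_keys_plus_distrib) (simp_all add: distrib_right single_add sum.distrib)

lemma delta_tensor_id_sum: "delta_tensor_id D (\<Sum>i\<in>S. t i) = (\<Sum>i\<in>S. delta_tensor_id D (t i))"
  using delta_tensor_id_add[of D 0 0]
  by (induction S rule: infinite_finite_induct) (simp_all add: delta_tensor_id_add)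

lemma id_tensor_delta_sum: "id_tensor_delta D (\<Sum>i\<in>S. t i) = (\<Sum>i\<in>S. id_tensor_delta D (t i))"
  using id_tensor_delta_add[of D 0 0]
  by (induction S rule: infinite_finite_induct) (simp_all add: id_tensor_delta_add)

lemma delta_tensor_id_single:
  "delta_tensor_id D (Poly_Mapping.single k w)
   = (\<Sum>r\<in>Poly_Mapping.keys (D (fst k)). Poly_Mapping.single (r, snd k) (w * Poly_Mapping.lookup (D (fst k)) r))"
  by (cases "w = 0") (simp_all add: delta_tensor_id_def)

lemma id_tensor_delta_single:
  "id_tensor_delta D (Poly_Mapping.single k w)
   = (\<Sum>r\<in>Poly_Mapping.keys (D (snd k)). Poly_Mapping.single ((fst k, fst r), snd r) (w * Poly_Mapping.lookup (D (snd k)) r))"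
  by (cases "w = 0") (simp_all add: id_tensor_delta_def)

definition iso_by :: "(nat \<Rightarrow> nat) \<Rightarrow> ppraw \<Rightarrow> ppraw \<Rightarrow> bool" where
  "iso_by f P Q \<longleftrightarrow> bij_betw f (fst P) (fst Q) \<and>
     (\<forall>x\<in>fst P. \<forall>y\<in>fst P. ((x, y) \<in> fst (snd P) \<longleftrightarrow> (f x, f y) \<in> fst (snd Q)) \<and>
                          ((x, y) \<in> snd (snd P) \<longleftrightarrow> (f x, f y) \<in> snd (snd Q)))"

lemma pp_iso_iff_iso_by: "pp_iso P Q \<longleftrightarrow> (\<exists>f. iso_by f P Q)"
  by (cases P; cases Q) (simp add: pp_iso_def iso_by_def)

lemma iso_by_inv: "iso_by f P Q \<Longrightarrow> iso_by (inv_into (fst P) f) Q P"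
  unfolding iso_by_def
  by (auto simp: bij_betw_inv_into bij_betw_inv_into_right bij_betw_imp_surj_on inv_into_into
      dest: bij_betw_inv_into_right)

lemma iso_by_comp: "iso_by f P Q \<Longrightarrow> iso_by g Q Z \<Longrightarrow> iso_by (g \<circ> f) P Z"
  unfolding iso_by_def by (auto intro: bij_betw_trans dest: bij_betwE)

lemma pp_iso_refl: "pp_iso P P"
  unfolding pp_iso_iff_iso_by iso_by_def by (auto intro: bij_betw_id)

lemma pp_iso_sym: "pp_iso P Q \<Longrightarrow> pp_iso Q P"
  using iso_by_inv pp_iso_iff_iso_by by blast

lemma pp_iso_trans: "pp_iso P Q \<Longrightarrow> pp_iso Q Z \<Longrightarrow> pp_iso P Z"
  unfolding pp_iso_iff_iso_by using iso_by_comp by blast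

lemma pp_class_eqI: "pp_iso P Q \<Longrightarrow> pp_class P = pp_class Q"
  unfolding pp_class_def using pp_iso_sym pp_iso_trans by blast

lemma pp_class_eqI_iso_by: "iso_by f P Q \<Longrightarrow> pp_class Q = pp_class P"
  using pp_class_eqI pp_iso_iff_iso_by pp_iso_sym by blast

lemma assumes "is_pp P"
  shows is_pp_rep_class: "is_pp (pp_rep (pp_class P))"
    and pp_iso_rep_class: "pp_iso P (pp_rep (pp_class P))"
proof -
  have "pp_rep (pp_class P) \<in> pp_class P"
    unfolding pp_rep_def by (rule someI[of _ P]) (simp add: pp_class_def pp_iso_refl assms)
  then show "is_pp (pp_rep (pp_class P))" "pp_iso P (pp_rep (pp_class P))"
    unfolding pp_class_def by auto
qed

lemma assumes "x \<in> PP"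
  shows is_pp_rep: "is_pp (pp_rep x)"
    and pp_class_rep: "pp_class (pp_rep x) = x"
proof -
  obtain P where x: "x = pp_class P" "is_pp P"
    using assms unfolding PP_def by auto
  then show "is_pp (pp_rep x)" using is_pp_rep_class by simp
  show "pp_class (pp_rep x) = x"
    using x pp_iso_rep_class pp_class_eqI pp_iso_sym by metis
qed

lemma pp_card_class: assumes "is_pp P" shows "pp_card (pp_class P) = card (fst P)"
  using pp_iso_rep_class[OF assms] bij_betw_same_card
  unfolding pp_card_def pp_iso_iff_iso_by iso_by_def by metis

lemma is_pp_carrier:
  assumes "is_pp (A, H, R)"
  shows "finite A" "H \<subseteq> A \<times> A" "R \<subseteq> A \<times> A"
  using assms unfolding is_pp_def partial_order_on_def preorder_on_def by auto

lemma partial_order_on_Restr: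
  "partial_order_on A r \<Longrightarrow> S \<subseteq> A \<Longrightarrow> partial_order_on S (Restr r S)"
  by (auto simp: partial_order_on_def preorder_on_def refl_on_def intro: trans_Restr antisym_Restr)

lemma is_pp_restrict: assumes "is_pp P" "S \<subseteq> fst P" shows "is_pp (pp_restrict P S)"
proof -
  obtain A H R where P: "P = (A, H, R)" by (cases P)
  have "finite S" "partial_order_on S (Restr H S)" "partial_order_on S (Restr R S)"
    using assms finite_subset partial_order_on_Restr unfolding P is_pp_def by auto
  moreover have "\<forall>x\<in>S. \<forall>y\<in>S. x \<noteq> y \<longrightarrow>
      (((x, y) \<in> H \<or> (y, x) \<in> H) \<longleftrightarrow> \<not> ((x, y) \<in> R \<or> (y, x) \<in> R))"
    using assms unfolding P is_pp_def by auto
  ultimately show ?thesis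
    unfolding P is_pp_def pp_restrict_def by auto
qed

lemma fst_pp_restrict [simp]: "fst (pp_restrict P S) = S"
  by (cases P) (simp add: pp_restrict_def)

lemma pp_restrict_pp_restrict: "T \<subseteq> S \<Longrightarrow> pp_restrict (pp_restrict P S) T = pp_restrict P T"
  by (cases P) (auto simp: pp_restrict_def)

lemma pp_restrict_carrier: "is_pp (A, H, R) \<Longrightarrow> pp_restrict (A, H, R) A = (A, H, R)"
  using is_pp_carrier[of A H R] by (simp add: pp_restrict_def Int_absorb2)

lemma iso_by_restrict:
  assumes "iso_by f P Q" "S \<subseteq> fst P"
  shows "iso_by f (pp_restrict P S) (pp_restrict Q (f ` S))"
proof -
  have "inj_on f S"
    using assms bij_betw_imp_inj_on inj_on_subset unfolding iso_by_def by blast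
  then show ?thesis
    using assms unfolding iso_by_def pp_restrict_def
    by (cases P; cases Q) (auto simp: inj_on_imp_bij_betw subset_iff)
qed

lemma biideal_iff:
  "biideal (A, H, R) I \<longleftrightarrow>
     I \<subseteq> A \<and> (\<forall>x y. x \<in> I \<and> (x, y) \<in> H \<longrightarrow> y \<in> I) \<and> (\<forall>x y. x \<in> I \<and> (x, y) \<in> R \<longrightarrow> y \<in> I)"
  unfolding biideal_def prod.case by blast

lemma biideal_pp_restrict_iff:
  "biideal (pp_restrict (A, H, R) S) J \<longleftrightarrow> J \<subseteq> S \<and>
     (\<forall>x y. x \<in> J \<and> (x, y) \<in> H \<and> y \<in> S \<longrightarrow> y \<in> J) \<and>
     (\<forall>x y. x \<in> J \<and> (x, y) \<in> R \<and> y \<in> S \<longrightarrow> y \<in> J)"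
  unfolding biideal_def pp_restrict_def prod.case by blast

lemma biideal_iff_Image: "biideal (A, H, R) I \<longleftrightarrow> I \<subseteq> A \<and> H `` I \<subseteq> I \<and> R `` I \<subseteq> I"
  unfolding biideal_def by blast

lemma biideal_subset: "biideal P I \<Longrightarrow> I \<subseteq> fst P"
  by (cases P) (simp add: biideal_def)

lemma finite_biideals:
  assumes "is_pp P" shows "finite {I. biideal P I}"
proof -
  have "finite (fst P)" using assms is_pp_carrier(1) by (cases P) simp
  then show ?thesis by (rule finite_subset[rotated, OF finite_Pow_iff[THEN iffD2]]) (auto dest: biideal_subset)
qed

lemma biideal_pp_restrict_Int:
  assumes "biideal P K" shows "biideal (pp_restrict P S) (K \<inter> S)"
proof -
  obtain A H R where P: "P = (A, H, R)" by (cases P)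
  show ?thesis using assms unfolding P biideal_iff biideal_pp_restrict_iff by blast
qed

lemma biideal_pp_restrict_biideal:
  assumes "biideal P K" "biideal (pp_restrict P K) L" shows "biideal P L"
proof -
  obtain A H R where P: "P = (A, H, R)" by (cases P)
  show ?thesis using assms unfolding P biideal_iff biideal_pp_restrict_iff by blast
qed

lemma biideal_Un_biideal_complement:
  assumes "is_pp P" "biideal P I" "biideal (pp_restrict P (fst P - I)) J"
  shows "biideal P (I \<union> J)"
proof -
  obtain A H R where P: "P = (A, H, R)" by (cases P)
  have "H \<subseteq> A \<times> A" "R \<subseteq> A \<times> A" using assms(1) is_pp_carrier unfolding P by blast+
  then show ?thesis
    using assms(2,3) unfolding P fst_conv biideal_iff biideal_pp_restrict_iff by blast
qed

lemma biideal_image_iff: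
  assumes f: "iso_by f P Q" and "is_pp P" "is_pp Q" and I: "I \<subseteq> fst P"
  shows "biideal Q (f ` I) \<longleftrightarrow> biideal P I"
proof -
  obtain A H R B H' R' where P: "P = (A, H, R)" and Q: "Q = (B, H', R')"
    by (cases P; cases Q)
  have f_H: "\<And>x y. x \<in> A \<Longrightarrow> y \<in> A \<Longrightarrow> (f x, f y) \<in> H' \<longleftrightarrow> (x, y) \<in> H"
    and f_R: "\<And>x y. x \<in> A \<Longrightarrow> y \<in> A \<Longrightarrow> (f x, f y) \<in> R' \<longleftrightarrow> (x, y) \<in> R"
    and img: "f ` A = B" and inj: "inj_on f A"
    using f unfolding iso_by_def bij_betw_def P Q by simp_all
  have HR: "H \<subseteq> A \<times> A" "R \<subseteq> A \<times> A" "H' \<subseteq> B \<times> B" "R' \<subseteq> B \<times> B"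
    using assms(2,3) is_pp_carrier unfolding P Q by blast+
  have mem: "f y \<in> f ` I \<longleftrightarrow> y \<in> I" if "y \<in> A" for y
    using inj I that unfolding P by (auto dest: inj_onD)
  have up_H: "(\<forall>u v. u \<in> f ` I \<and> (u, v) \<in> H' \<longrightarrow> v \<in> f ` I) \<longleftrightarrow>
      (\<forall>x y. x \<in> I \<and> (x, y) \<in> H \<longrightarrow> y \<in> I)"
  proof -
    have "(\<forall>u v. u \<in> f ` I \<and> (u, v) \<in> H' \<longrightarrow> v \<in> f ` I) \<longleftrightarrow>
        (\<forall>x\<in>I. \<forall>y\<in>A. (f x, f y) \<in> H' \<longrightarrow> f y \<in> f ` I)"
      using HR(3) img by blast
    also have "\<dots> \<longleftrightarrow> (\<forall>x\<in>I. \<forall>y\<in>A. (x, y) \<in> H \<longrightarrow> y \<in> I)"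
      using I unfolding P by (simp add: subset_iff f_H mem)
    also have "\<dots> \<longleftrightarrow> (\<forall>x y. x \<in> I \<and> (x, y) \<in> H \<longrightarrow> y \<in> I)"
      using HR(1) by blast
    finally show ?thesis .
  qed
  have up_R: "(\<forall>u v. u \<in> f ` I \<and> (u, v) \<in> R' \<longrightarrow> v \<in> f ` I) \<longleftrightarrow>
      (\<forall>x y. x \<in> I \<and> (x, y) \<in> R \<longrightarrow> y \<in> I)"
  proof -
    have "(\<forall>u v. u \<in> f ` I \<and> (u, v) \<in> R' \<longrightarrow> v \<in> f ` I) \<longleftrightarrow>
        (\<forall>x\<in>I. \<forall>y\<in>A. (f x, f y) \<in> R' \<longrightarrow> f y \<in> f ` I)"
      using HR(4) img by blast
    also have "\<dots> \<longleftrightarrow> (\<forall>x\<in>I. \<forall>y\<in>A. (x, y) \<in> R \<longrightarrow> y \<in> I)"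
      using I unfolding P by (simp add: subset_iff f_R mem)
    also have "\<dots> \<longleftrightarrow> (\<forall>x y. x \<in> I \<and> (x, y) \<in> R \<longrightarrow> y \<in> I)"
      using HR(2) by blast
    finally show ?thesis .
  qed
  show ?thesis
    using I img unfolding P Q biideal_iff up_H up_R by auto
qed

lemma biideals_iso:
  assumes f: "iso_by f P Q" and "is_pp P" "is_pp Q"
  shows "{J. biideal Q J} = (`) f ` {I. biideal P I}"
proof (intro set_eqI iffI)
  fix J assume "J \<in> {J. biideal Q J}"
  then have J: "biideal Q J" "J \<subseteq> fst Q" by (auto dest: biideal_subset)
  have "f ` fst P = fst Q" using f unfolding iso_by_def bij_betw_def by simp
  then have "J = f ` {x \<in> fst P. f x \<in> J}" using J(2) by auto
  then show "J \<in> (`) f ` {I. biideal P I}"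
    using J(1) biideal_image_iff[OF assms, of "{x \<in> fst P. f x \<in> J}"] by auto
next
  fix J assume "J \<in> (`) f ` {I. biideal P I}"
  then obtain I where "biideal P I" "J = f ` I" by auto
  then show "J \<in> {J. biideal Q J}"
    using biideal_image_iff[OF assms biideal_subset] by auto
qed

lemma hcount_empty [simp]: "hcount P {} Y = 0" "hcount P X {} = 0"
  by (cases P; simp add: hcount_def)+

lemma hcount_iso:
  assumes "iso_by f P Q" "X \<subseteq> fst P" "Y \<subseteq> fst P"
  shows "hcount Q (f ` X) (f ` Y) = hcount P X Y"
proof -
  obtain A H R B H' R' where P: "P = (A, H, R)" and Q: "Q = (B, H', R')"
    by (cases P; cases Q)
  let ?pairs = "{(x, y). x \<in> X \<and> y \<in> Y \<and> (x, y) \<in> H \<and> x \<noteq> y}"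
  have inj: "inj_on f A"
    using assms bij_betw_imp_inj_on unfolding iso_by_def P by auto
  then have "inj_on (map_prod f f) ?pairs"
    using assms(2,3) unfolding P by (auto simp: inj_on_def)
  moreover have "{(x, y). x \<in> f ` X \<and> y \<in> f ` Y \<and> (x, y) \<in> H' \<and> x \<noteq> y} = map_prod f f ` ?pairs"
    using assms inj unfolding P Q iso_by_def by (auto 0 3 simp: inj_on_def subset_iff)
  ultimately show ?thesis
    unfolding P Q hcount_def by (simp add: card_image)
qed

lemma hcount_pp_restrict:
  "X \<subseteq> S \<Longrightarrow> Y \<subseteq> S \<Longrightarrow> hcount (pp_restrict P S) X Y = hcount P X Y"
  by (cases P) (auto simp: pp_restrict_def hcount_def intro!: arg_cong[where f = card])

lemma hcount_Un_left:
  assumes "X1 \<inter> X2 = {}" "finite X1" "finite X2" "finite Y"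
  shows "hcount P (X1 \<union> X2) Y = hcount P X1 Y + hcount P X2 Y"
proof -
  obtain A H R where P: "P = (A, H, R)" by (cases P)
  let ?pairs = "\<lambda>X. {(x, y). x \<in> X \<and> y \<in> Y \<and> (x, y) \<in> H \<and> x \<noteq> y}"
  have fin: "finite (?pairs X)" if "finite X" for X
    by (rule finite_subset[of _ "X \<times> Y"]) (use that assms(4) in auto)
  have split: "?pairs (X1 \<union> X2) = ?pairs X1 \<union> ?pairs X2" "?pairs X1 \<inter> ?pairs X2 = {}"
    using assms(1) by blast+
  show ?thesis
    unfolding P hcount_def prod.case split(1)
    by (rule card_Un_disjoint[OF fin[OF assms(2)] fin[OF assms(3)] split(2)])
qed

lemma hcount_Un_right:
  assumes "Y1 \<inter> Y2 = {}" "finite Y1" "finite Y2" "finite X"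
  shows "hcount P X (Y1 \<union> Y2) = hcount P X Y1 + hcount P X Y2"
proof -
  obtain A H R where P: "P = (A, H, R)" by (cases P)
  let ?pairs = "\<lambda>Y. {(x, y). x \<in> X \<and> y \<in> Y \<and> (x, y) \<in> H \<and> x \<noteq> y}"
  have fin: "finite (?pairs Y)" if "finite Y" for Y
    by (rule finite_subset[of _ "X \<times> Y"]) (use that assms(4) in auto)
  have split: "?pairs (Y1 \<union> Y2) = ?pairs Y1 \<union> ?pairs Y2" "?pairs Y1 \<inter> ?pairs Y2 = {}"
    using assms(1) by blast+
  show ?thesis
    unfolding P hcount_def prod.case split(1)
    by (rule card_Un_disjoint[OF fin[OF assms(2)] fin[OF assms(3)] split(2)])
qed

lemma delta_raw_iso:
  assumes "is_pp P" "is_pp Q" "pp_iso P Q"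
  shows "delta_raw q Q = delta_raw q P"
proof -
  obtain f where f: "iso_by f P Q" using assms(3) pp_iso_iff_iso_by by blast
  have inj: "inj_on f (fst P)" and img: "f ` fst P = fst Q"
    using f unfolding iso_by_def by (auto simp: bij_betw_def)
  have inj_image: "inj_on ((`) f) {I. biideal P I}"
    by (rule inj_on_image, rule inj_on_subset[OF inj]) (auto dest: biideal_subset)
  have summand: "Poly_Mapping.single (pp_class (pp_restrict Q (fst Q - f ` I)), pp_class (pp_restrict Q (f ` I)))
        (q ^ hcount Q (fst Q - f ` I) (f ` I))
      = Poly_Mapping.single (pp_class (pp_restrict P (fst P - I)), pp_class (pp_restrict P I))
        (q ^ hcount P (fst P - I) I)" if "biideal P I" for I
  proof -
    have I: "I \<subseteq> fst P" using that by (rule biideal_subset)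
    have "fst Q - f ` I = f ` (fst P - I)"
      using inj I img by (simp add: inj_on_image_set_diff)
    then show ?thesis
      using pp_class_eqI_iso_by[OF iso_by_restrict[OF f I]]
        pp_class_eqI_iso_by[OF iso_by_restrict[OF f Diff_subset]] hcount_iso[OF f Diff_subset I]
      by simp
  qed
  show ?thesis
    unfolding delta_raw_def biideals_iso[OF f assms(1,2)] sum.reindex[OF inj_image] comp_def
    by (rule sum.cong) (simp_all add: summand)
qed

lemma delta_class: "is_pp P \<Longrightarrow> delta q (pp_class P) = delta_raw q P"
  unfolding delta_def by (rule delta_raw_iso[OF _ is_pp_rep_class pp_iso_rep_class])

lemma delta_class_restrict:
  assumes "is_pp P" "S \<subseteq> fst P"
  shows "delta q (pp_class (pp_restrict P S)) = (\<Sum>J\<in>{J. biideal (pp_restrict P S) J}.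
      Poly_Mapping.single (pp_class (pp_restrict P (S - J)), pp_class (pp_restrict P J)) (q ^ hcount P (S - J) J))"
  unfolding delta_class[OF is_pp_restrict[OF assms]] delta_raw_def fst_pp_restrict
  by (intro sum.cong refl)
     (auto dest!: biideal_subset simp: pp_restrict_pp_restrict hcount_pp_restrict)

section \<open>Coassociativity\<close>

lemma sum_biideal_chains:
  assumes "is_pp P"
  shows "(\<Sum>I\<in>{I. biideal P I}. \<Sum>J\<in>{J. biideal (pp_restrict P (fst P - I)) J}. g (fst P - I - J) J I)
       = (\<Sum>K\<in>{K. biideal P K}. \<Sum>L\<in>{L. biideal (pp_restrict P K) L}. g (fst P - K) (K - L) L)"
proof -
  let ?S = "SIGMA I:{I. biideal P I}. {J. biideal (pp_restrict P (fst P - I)) J}"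
  let ?T = "SIGMA K:{K. biideal P K}. {L. biideal (pp_restrict P K) L}"
  have fin: "finite {J. biideal (pp_restrict P S) J}" if "S \<subseteq> fst P" for S
    using finite_biideals is_pp_restrict[OF assms that] .
  have "(\<Sum>(I, J)\<in>?S. g (fst P - I - J) J I) = (\<Sum>(K, L)\<in>?T. g (fst P - K) (K - L) L)"
  proof (rule sum.reindex_bij_witness[where j = "\<lambda>(I, J). (I \<union> J, I)" and i = "\<lambda>(K, L). (L, K - L)"])
    fix a assume "a \<in> ?S"
    then obtain I J where a: "a = (I, J)" "biideal P I" "biideal (pp_restrict P (fst P - I)) J"
      by auto
    have J: "J \<subseteq> fst P - I" using biideal_subset[OF a(3)] by simp
    show "(case case a of (I, J) \<Rightarrow> (I \<union> J, I) of (K, L) \<Rightarrow> (L, K - L)) = a"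
      using a(1) J by auto
    show "(case a of (I, J) \<Rightarrow> (I \<union> J, I)) \<in> ?T"
      using a biideal_Un_biideal_complement[OF assms] biideal_pp_restrict_Int[of P I "I \<union> J"]
      by (simp add: Int_absorb2)
    have "fst P - (I \<union> J) = fst P - I - J" "I \<union> J - I = J" using J by auto
    then show "(case (case a of (I, J) \<Rightarrow> (I \<union> J, I)) of (K, L) \<Rightarrow> g (fst P - K) (K - L) L)
        = (case a of (I, J) \<Rightarrow> g (fst P - I - J) J I)"
      by (simp add: a(1))
  next
    fix b assume "b \<in> ?T"
    then obtain K L where b: "b = (K, L)" "biideal P K" "biideal (pp_restrict P K) L"
      by auto
    have L: "L \<subseteq> K" using biideal_subset[OF b(3)] by simp
    have K: "K \<subseteq> fst P" using biideal_subset[OF b(2)] .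
    show "(case case b of (K, L) \<Rightarrow> (L, K - L) of (I, J) \<Rightarrow> (I \<union> J, I)) = b"
      using b(1) L by auto
    have "K - L = K \<inter> (fst P - L)" using K by blast
    then show "(case b of (K, L) \<Rightarrow> (L, K - L)) \<in> ?S"
      using b biideal_pp_restrict_biideal biideal_pp_restrict_Int[of P K "fst P - L"] by simp
  qed
  moreover have "(\<Sum>I\<in>{I. biideal P I}. \<Sum>J\<in>{J. biideal (pp_restrict P (fst P - I)) J}. g (fst P - I - J) J I)
      = (\<Sum>(I, J)\<in>?S. g (fst P - I - J) J I)"
    by (rule sum.Sigma) (auto intro: finite_biideals[OF assms] fin)
  moreover have "(\<Sum>K\<in>{K. biideal P K}. \<Sum>L\<in>{L. biideal (pp_restrict P K) L}. g (fst P - K) (K - L) L)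
      = (\<Sum>(K, L)\<in>?T. g (fst P - K) (K - L) L)"
    by (rule sum.Sigma) (auto intro: finite_biideals[OF assms] fin dest: biideal_subset)
  ultimately show ?thesis by simp
qed

(* The common summand of both iterated coproducts for the decomposition P = X \<union> Y \<union> Z. *)
definition triple_split :: "'k::field \<Rightarrow> 'k \<Rightarrow> ppraw \<Rightarrow> nat set \<Rightarrow> nat set \<Rightarrow> nat set \<Rightarrow> ((ppc \<times> ppc) \<times> ppc) \<Rightarrow>\<^sub>0 'k"
  where "triple_split q s P X Y Z =
    Poly_Mapping.single ((pp_class (pp_restrict P X), pp_class (pp_restrict P Y)), pp_class (pp_restrict P Z))
      (s * q ^ (hcount P X Y + hcount P X Z + hcount P Y Z))"

lemma delta_tensor_id_delta_class:
  assumes "is_pp P"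
  shows "delta_tensor_id (delta q) (Poly_Mapping.map (\<lambda>c. s * c) (delta q (pp_class P)))
       = (\<Sum>I\<in>{I. biideal P I}. \<Sum>J\<in>{J. biideal (pp_restrict P (fst P - I)) J}.
            triple_split q s P (fst P - I - J) J I)"
proof -
  have fin_P: "finite (fst P)" using assms is_pp_carrier(1) by (cases P) simp
  have "delta_tensor_id (delta q) (Poly_Mapping.map (\<lambda>c. s * c) (delta q (pp_class P)))
      = (\<Sum>I\<in>{I. biideal P I}. delta_tensor_id (delta q)
          (Poly_Mapping.single (pp_class (pp_restrict P (fst P - I)), pp_class (pp_restrict P I))
            (s * q ^ hcount P (fst P - I) I)))"
    unfolding delta_class[OF assms] delta_raw_def map_mult_sum_single[OF finite_biideals[OF assms]]
      delta_tensor_id_sum ..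
  also have "\<dots> = (\<Sum>I\<in>{I. biideal P I}. \<Sum>J\<in>{J. biideal (pp_restrict P (fst P - I)) J}.
      triple_split q s P (fst P - I - J) J I)"
  proof (rule sum.cong[OF refl])
    fix I assume "I \<in> {I. biideal P I}"
    then have I: "I \<subseteq> fst P" by (auto dest: biideal_subset)
    have "hcount P (fst P - I) I = hcount P (fst P - I - J) I + hcount P J I" if "J \<subseteq> fst P - I" for J
    proof -
      have "hcount P ((fst P - I - J) \<union> J) I = hcount P (fst P - I - J) I + hcount P J I"
        by (rule hcount_Un_left) (use fin_P I that in \<open>auto intro: finite_subset\<close>)
      moreover have "(fst P - I - J) \<union> J = fst P - I" using that by blast
      ultimately show ?thesis by simp
    qed
    then show "delta_tensor_id (delta q)
          (Poly_Mapping.single (pp_class (pp_restrict P (fst P - I)), pp_class (pp_restrict P I))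
            (s * q ^ hcount P (fst P - I) I))
        = (\<Sum>J\<in>{J. biideal (pp_restrict P (fst P - I)) J}. triple_split q s P (fst P - I - J) J I)"
      unfolding delta_tensor_id_single fst_conv snd_conv delta_class_restrict[OF assms Diff_subset]
        sum_keys_single_mult[OF finite_biideals[OF is_pp_restrict[OF assms Diff_subset]]]
      by (intro sum.cong refl)
         (auto simp: triple_split_def power_add ac_simps dest!: biideal_subset)
  qed
  finally show ?thesis .
qed

lemma id_tensor_delta_delta_class:
  assumes "is_pp P"
  shows "id_tensor_delta (delta q) (Poly_Mapping.map (\<lambda>c. s * c) (delta q (pp_class P)))
       = (\<Sum>K\<in>{K. biideal P K}. \<Sum>L\<in>{L. biideal (pp_restrict P K) L}.
            triple_split q s P (fst P - K) (K - L) L)"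
proof -
  have fin_P: "finite (fst P)" using assms is_pp_carrier(1) by (cases P) simp
  have "id_tensor_delta (delta q) (Poly_Mapping.map (\<lambda>c. s * c) (delta q (pp_class P)))
      = (\<Sum>K\<in>{K. biideal P K}. id_tensor_delta (delta q)
          (Poly_Mapping.single (pp_class (pp_restrict P (fst P - K)), pp_class (pp_restrict P K))
            (s * q ^ hcount P (fst P - K) K)))"
    unfolding delta_class[OF assms] delta_raw_def map_mult_sum_single[OF finite_biideals[OF assms]]
      id_tensor_delta_sum ..
  also have "\<dots> = (\<Sum>K\<in>{K. biideal P K}. \<Sum>L\<in>{L. biideal (pp_restrict P K) L}.
      triple_split q s P (fst P - K) (K - L) L)"
  proof (rule sum.cong[OF refl])
    fix K assume "K \<in> {K. biideal P K}"
    then have K: "K \<subseteq> fst P" by (auto dest: biideal_subset)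
    have "hcount P (fst P - K) K = hcount P (fst P - K) (K - L) + hcount P (fst P - K) L" if "L \<subseteq> K" for L
    proof -
      have "hcount P (fst P - K) ((K - L) \<union> L) = hcount P (fst P - K) (K - L) + hcount P (fst P - K) L"
        by (rule hcount_Un_right) (use fin_P K that in \<open>auto intro: finite_subset\<close>)
      moreover have "(K - L) \<union> L = K" using that by blast
      ultimately show ?thesis by simp
    qed
    then show "id_tensor_delta (delta q)
          (Poly_Mapping.single (pp_class (pp_restrict P (fst P - K)), pp_class (pp_restrict P K))
            (s * q ^ hcount P (fst P - K) K))
        = (\<Sum>L\<in>{L. biideal (pp_restrict P K) L}. triple_split q s P (fst P - K) (K - L) L)"
      unfolding id_tensor_delta_single fst_conv snd_conv delta_class_restrict[OF assms K]
        sum_keys_single_mult[OF finite_biideals[OF is_pp_restrict[OF assms K]]]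
      by (intro sum.cong refl)
         (auto simp: triple_split_def power_add ac_simps dest!: biideal_subset)
  qed
  finally show ?thesis .
qed

lemma delta_coassoc_basis:
  assumes "x \<in> PP"
  shows "delta_tensor_id (delta q) (Poly_Mapping.map (\<lambda>c. s * c) (delta q x))
       = id_tensor_delta (delta q) (Poly_Mapping.map (\<lambda>c. s * c) (delta q x))"
proof -
  have P: "is_pp (pp_rep x)" and x: "pp_class (pp_rep x) = x"
    using is_pp_rep[OF assms] pp_class_rep[OF assms] .
  show ?thesis
    using delta_tensor_id_delta_class[OF P, of q s] id_tensor_delta_delta_class[OF P, of q s]
      sum_biideal_chains[OF P, of "triple_split q s (pp_rep x)"]
    unfolding x by simp
qed

lemma delta_coassoc:
  assumes "Poly_Mapping.keys v \<subseteq> PP"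
  shows "delta_tensor_id (delta q) (delta_lin q v) = id_tensor_delta (delta q) (delta_lin q v)"
  unfolding delta_lin_def delta_tensor_id_sum id_tensor_delta_sum
  using delta_coassoc_basis assms by (intro sum.cong) auto

section \<open>Gluing two plane posets\<close>

definition glue :: "bool \<Rightarrow> ppraw \<Rightarrow> ppraw \<Rightarrow> ppraw" where
  "glue b P Q = (case P of (A, H, R) \<Rightarrow> case Q of (B, H', R') \<Rightarrow>
     (encl ` A \<union> encr ` B,
      map_prod encl encl ` H \<union> map_prod encr encr ` H' \<union> (if b then encl ` A \<times> encr ` B else {}),
      map_prod encl encl ` R \<union> map_prod encr encr ` R' \<union> (if b then {} else encl ` A \<times> encr ` B)))"

lemma pp_m_raw_eq_glue: "pp_m_raw P Q = glue False P Q"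
  by (cases P; cases Q) (simp add: pp_m_raw_def glue_def)

lemma pp_tri_raw_eq_glue: "pp_tri_raw P Q = glue True P Q"
  by (cases P; cases Q) (simp add: pp_tri_raw_def glue_def)

lemma inj_encl: "inj encl" and inj_encr: "inj encr"
  by (auto intro: injI simp: encl_def encr_def)

lemma encl_eq_iff [simp]: "encl a = encl a' \<longleftrightarrow> a = a'"
  and encr_eq_iff [simp]: "encr c = encr c' \<longleftrightarrow> c = c'"
  and encl_neq_encr [simp]: "encl a \<noteq> encr c" "encr c \<noteq> encl a"
  unfolding encl_def encr_def by presburger+

lemma mem_image_encl [simp]:
  "encl a \<in> encl ` S \<longleftrightarrow> a \<in> S" "encr c \<in> encr ` S \<longleftrightarrow> c \<in> S"
  "encl a \<notin> encr ` S" "encr c \<notin> encl ` S"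
  by auto

lemma mem_map_prod_encl [simp]:
  "(encl a, encl a') \<in> map_prod encl encl ` S \<longleftrightarrow> (a, a') \<in> S"
  "(encr c, encr c') \<in> map_prod encr encr ` S \<longleftrightarrow> (c, c') \<in> S"
  "(x, encr c) \<notin> map_prod encl encl ` S" "(encr c, y) \<notin> map_prod encl encl ` S"
  "(x, encl a) \<notin> map_prod encr encr ` S" "(encl a, y) \<notin> map_prod encr encr ` S"
  by (force simp: image_iff)+

lemma vimage_enc [simp]:
  "encl -` encl ` X = X" "encr -` encr ` Y = Y" "encl -` encr ` Y = {}" "encr -` encl ` X = {}"
  by auto

lemma image_encl_subset_iff [simp]: "encl ` S \<subseteq> encl ` X \<union> encr ` Y \<longleftrightarrow> S \<subseteq> X"
  and image_encr_subset_iff [simp]: "encr ` T \<subseteq> encl ` X \<union> encr ` Y \<longleftrightarrow> T \<subseteq> Y"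
  by auto

lemma enc_decompose: "I = encl ` (encl -` I) \<union> encr ` (encr -` I)"
proof -
  have "n \<in> range encl \<union> range encr" for n
    by (cases "even n") (auto simp: encl_def encr_def image_iff elim!: evenE oddE)
  then have "range encl \<union> range encr = UNIV" by blast
  then show ?thesis by (simp flip: Int_Un_distrib)
qed

lemma ball_enc_image: "(\<forall>x\<in>encl ` A \<union> encr ` B. P x) \<longleftrightarrow> (\<forall>a\<in>A. P (encl a)) \<and> (\<forall>c\<in>B. P (encr c))"
  by blast

lemma glue_unfold: "glue b (A, H, R) (B, H', R') = (encl ` A \<union> encr ` B,
      map_prod encl encl ` H \<union> map_prod encr encr ` H' \<union> (if b then encl ` A \<times> encr ` B else {}),
      map_prod encl encl ` R \<union> map_prod encr encr ` R' \<union> (if b then {} else encl ` A \<times> encr ` B))"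
  by (simp add: glue_def)

lemma partial_order_on_enc_sum:
  assumes "partial_order_on A r" "partial_order_on B s"
  shows "partial_order_on (encl ` A \<union> encr ` B)
    (map_prod encl encl ` r \<union> map_prod encr encr ` s \<union> (if b then encl ` A \<times> encr ` B else {}))"
    (is "partial_order_on _ ?G")
proof -
  have r: "r \<subseteq> A \<times> A" "refl_on A r" "trans r" "antisym r"
    and s: "s \<subseteq> B \<times> B" "refl_on B s" "trans s" "antisym s"
    using assms unfolding partial_order_on_def preorder_on_def by auto
  have "trans ?G"
  proof (rule transI)
    fix x y z assume "(x, y) \<in> ?G" "(y, z) \<in> ?G"
    then show "(x, z) \<in> ?G"
      using r s by (cases b) (auto dest: transD)
  qed
  moreover have "antisym ?G"
  proof (rule antisymI)
    fix x y assume "(x, y) \<in> ?G" "(y, x) \<in> ?G"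
    then show "x = y"
      using r s by (cases b) (auto dest: antisymD)
  qed
  moreover have "?G \<subseteq> (encl ` A \<union> encr ` B) \<times> (encl ` A \<union> encr ` B)"
    "refl_on (encl ` A \<union> encr ` B) ?G"
    using r s by (auto simp: refl_on_def)
  ultimately show ?thesis
    unfolding partial_order_on_def preorder_on_def by simp
qed

lemma is_pp_glue:
  assumes X: "is_pp (A, H, R)" and Y: "is_pp (B, H', R')"
  shows "is_pp (glue b (A, H, R) (B, H', R'))"
proof -
  have "partial_order_on A H" "partial_order_on A R" "partial_order_on B H'" "partial_order_on B R'"
    and plane_X: "\<forall>x\<in>A. \<forall>y\<in>A. x \<noteq> y \<longrightarrow> (((x, y) \<in> H \<or> (y, x) \<in> H) \<longleftrightarrow> \<not> ((x, y) \<in> R \<or> (y, x) \<in> R))"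
    and plane_Y: "\<forall>x\<in>B. \<forall>y\<in>B. x \<noteq> y \<longrightarrow> (((x, y) \<in> H' \<or> (y, x) \<in> H') \<longleftrightarrow> \<not> ((x, y) \<in> R' \<or> (y, x) \<in> R'))"
    using X Y unfolding is_pp_def by auto
  then have "partial_order_on (encl ` A \<union> encr ` B)
      (map_prod encl encl ` H \<union> map_prod encr encr ` H' \<union> (if b then encl ` A \<times> encr ` B else {}))"
    "partial_order_on (encl ` A \<union> encr ` B)
      (map_prod encl encl ` R \<union> map_prod encr encr ` R' \<union> (if \<not> b then encl ` A \<times> encr ` B else {}))"
    by (simp_all add: partial_order_on_enc_sum)
  moreover have "finite (encl ` A \<union> encr ` B)"
    using is_pp_carrier(1)[OF X] is_pp_carrier(1)[OF Y] by simp
  moreover have "\<forall>x\<in>encl ` A \<union> encr ` B. \<forall>y\<in>encl ` A \<union> encr ` B. x \<noteq> y \<longrightarrow>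
      (((x, y) \<in> map_prod encl encl ` H \<union> map_prod encr encr ` H' \<union> (if b then encl ` A \<times> encr ` B else {})
        \<or> (y, x) \<in> map_prod encl encl ` H \<union> map_prod encr encr ` H' \<union> (if b then encl ` A \<times> encr ` B else {}))
      \<longleftrightarrow> \<not> ((x, y) \<in> map_prod encl encl ` R \<union> map_prod encr encr ` R' \<union> (if b then {} else encl ` A \<times> encr ` B)
        \<or> (y, x) \<in> map_prod encl encl ` R \<union> map_prod encr encr ` R' \<union> (if b then {} else encl ` A \<times> encr ` B)))"
    unfolding ball_enc_image using plane_X plane_Y by (cases b) simp_all
  ultimately show ?thesis
    unfolding is_pp_def glue_unfold prod.case by (simp add: if_not_P split: if_splits)
qed

definition enc_map :: "(nat \<Rightarrow> nat) \<Rightarrow> (nat \<Rightarrow> nat) \<Rightarrow> nat \<Rightarrow> nat" where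
  "enc_map f g n = (if even n then encl (f (n div 2)) else encr (g (n div 2)))"

lemma enc_map_simps [simp]: "enc_map f g (encl a) = encl (f a)" "enc_map f g (encr c) = encr (g c)"
  by (simp_all add: enc_map_def encl_def encr_def)

lemma iso_by_glue:
  assumes f: "iso_by f (A, H, R) (A', H1, R1)" and g: "iso_by g (B, H', R') (B', H1', R1')"
  shows "iso_by (enc_map f g) (glue b (A, H, R) (B, H', R')) (glue b (A', H1, R1) (B', H1', R1'))"
proof -
  have f_bij: "inj_on f A" "f ` A = A'" and g_bij: "inj_on g B" "g ` B = B'"
    using f g unfolding iso_by_def bij_betw_def by simp_all
  have "inj_on (enc_map f g) (encl ` A \<union> encr ` B)"
  proof -
    have "inj_on (enc_map f g) (encl ` A)" "inj_on (enc_map f g) (encr ` B)"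
      using f_bij(1) g_bij(1) by (auto intro!: inj_on_imageI simp: comp_def inj_on_def)
    moreover have "enc_map f g ` (encl ` A - encr ` B) \<inter> enc_map f g ` (encr ` B - encl ` A) = {}"
      by auto
    ultimately show ?thesis by (simp add: inj_on_Un)
  qed
  moreover have "enc_map f g ` (encl ` A \<union> encr ` B) = encl ` A' \<union> encr ` B'"
    unfolding f_bij(2)[symmetric] g_bij(2)[symmetric] by (simp add: image_Un image_image)
  ultimately have "bij_betw (enc_map f g) (encl ` A \<union> encr ` B) (encl ` A' \<union> encr ` B')"
    by (simp add: bij_betw_def)
  moreover have "f a \<in> A'" if "a \<in> A" for a using that f_bij by blast
  moreover have "g c \<in> B'" if "c \<in> B" for c using that g_bij by blast
  ultimately show ?thesis
    using f g unfolding iso_by_def glue_unfold prod.case fst_conv snd_conv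
    by (cases b) (simp_all add: ball_enc_image)
qed

lemma pp_iso_glue: "pp_iso X X' \<Longrightarrow> pp_iso Y Y' \<Longrightarrow> pp_iso (glue b X Y) (glue b X' Y')"
  unfolding pp_iso_iff_iso_by using iso_by_glue by (cases X; cases X'; cases Y; cases Y') blast

lemma pp_restrict_glue:
  assumes "X \<subseteq> A" "Y \<subseteq> B"
  shows "pp_restrict (glue b (A, H, R) (B, H', R')) (encl ` X \<union> encr ` Y)
       = glue b (pp_restrict (A, H, R) X) (pp_restrict (B, H', R') Y)"
  using assms by (cases b) (auto simp: glue_unfold pp_restrict_def)

lemma pp_class_restrict_encl:
  assumes "X \<subseteq> A"
  shows "pp_class (pp_restrict (glue b (A, H, R) (B, H', R')) (encl ` X)) = pp_class (pp_restrict (A, H, R) X)"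
proof -
  have "iso_by encl (pp_restrict (A, H, R) X) (pp_restrict (glue b (A, H, R) (B, H', R')) (encl ` X))"
    using assms unfolding iso_by_def glue_unfold pp_restrict_def prod.case fst_conv snd_conv
    by (cases b) (auto simp: inj_on_imp_bij_betw inj_on_subset[OF inj_encl])
  then show ?thesis by (rule pp_class_eqI_iso_by)
qed

lemma pp_class_restrict_encr:
  assumes "Y \<subseteq> B"
  shows "pp_class (pp_restrict (glue b (A, H, R) (B, H', R')) (encr ` Y)) = pp_class (pp_restrict (B, H', R') Y)"
proof -
  have "iso_by encr (pp_restrict (B, H', R') Y) (pp_restrict (glue b (A, H, R) (B, H', R')) (encr ` Y))"
    using assms unfolding iso_by_def glue_unfold pp_restrict_def prod.case fst_conv snd_conv
    by (cases b) (auto simp: inj_on_imp_bij_betw inj_on_subset[OF inj_encr])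
  then show ?thesis by (rule pp_class_eqI_iso_by)
qed

lemma hcount_glue:
  assumes "is_pp (A, H, R)" "is_pp (B, H', R')" "X1 \<subseteq> A" "X2 \<subseteq> A" "Y1 \<subseteq> B" "Y2 \<subseteq> B"
  shows "hcount (glue b (A, H, R) (B, H', R')) (encl ` X1 \<union> encr ` Y1) (encl ` X2 \<union> encr ` Y2)
       = hcount (A, H, R) X1 X2 + hcount (B, H', R') Y1 Y2 + (if b then card X1 * card Y2 else 0)"
proof -
  let ?PX = "{(x, y). x \<in> X1 \<and> y \<in> X2 \<and> (x, y) \<in> H \<and> x \<noteq> y}"
  let ?PY = "{(x, y). x \<in> Y1 \<and> y \<in> Y2 \<and> (x, y) \<in> H' \<and> x \<noteq> y}"
  let ?C = "if b then encl ` X1 \<times> encr ` Y2 else {}"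
  have fin: "finite A" "finite B" using assms(1,2) by (auto dest: is_pp_carrier(1))
  have "finite ?PX" by (rule finite_subset[of _ "A \<times> A"]) (use fin assms(3,4) in auto)
  moreover have "finite ?PY" by (rule finite_subset[of _ "B \<times> B"]) (use fin assms(5,6) in auto)
  moreover have "finite ?C" using fin assms(3,6) by (auto intro: finite_subset)
  ultimately have fin_parts: "finite (map_prod encl encl ` ?PX)" "finite (map_prod encr encr ` ?PY)" "finite ?C"
    by simp_all
  have "{(x, y). x \<in> encl ` X1 \<union> encr ` Y1 \<and> y \<in> encl ` X2 \<union> encr ` Y2 \<and>
      (x, y) \<in> map_prod encl encl ` H \<union> map_prod encr encr ` H' \<union> (if b then encl ` A \<times> encr ` B else {}) \<and> x \<noteq> y}
    = map_prod encl encl ` ?PX \<union> map_prod encr encr ` ?PY \<union> ?C"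
    using assms(3-6) by (cases b) auto
  then have "hcount (glue b (A, H, R) (B, H', R')) (encl ` X1 \<union> encr ` Y1) (encl ` X2 \<union> encr ` Y2)
      = card (map_prod encl encl ` ?PX \<union> map_prod encr encr ` ?PY \<union> ?C)"
    unfolding glue_unfold hcount_def prod.case by simp
  also have "\<dots> = card (map_prod encl encl ` ?PX) + card (map_prod encr encr ` ?PY) + card ?C"
  proof -
    have "map_prod encl encl ` ?PX \<inter> map_prod encr encr ` ?PY = {}"
      "(map_prod encl encl ` ?PX \<union> map_prod encr encr ` ?PY) \<inter> ?C = {}"
      by auto
    then show ?thesis
      using fin_parts by (simp add: card_Un_disjoint)
  qed
  also have "\<dots> = card ?PX + card ?PY + (if b then card X1 * card Y2 else 0)"
  proof -
    have "inj (map_prod encl encl)" "inj (map_prod encr encr)"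
      using map_prod_inj_on[OF inj_encl inj_encl] map_prod_inj_on[OF inj_encr inj_encr] by simp_all
    then show ?thesis
      by (simp add: card_image card_cartesian_product inj_on_subset[OF inj_encl] inj_on_subset[OF inj_encr]
        inj_on_subset[of "map_prod encl encl"] inj_on_subset[of "map_prod encr encr"])
  qed
  finally show ?thesis
    unfolding hcount_def prod.case .
qed

lemma Image_map_prod_encl: "(map_prod encl encl ` r) `` (encl ` X \<union> encr ` Y) = encl ` (r `` X)"
  by force

lemma Image_map_prod_encr: "(map_prod encr encr ` r) `` (encl ` X \<union> encr ` Y) = encr ` (r `` Y)"
  by force

lemma Image_encl_times_encr:
  "(encl ` A \<times> encr ` B) `` (encl ` X \<union> encr ` Y) = (if A \<inter> X = {} then {} else encr ` B)"
  by auto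

lemma biideal_glue_iff:
  "biideal (glue b (A, H, R) (B, H', R')) (encl ` X \<union> encr ` Y) \<longleftrightarrow>
    biideal (A, H, R) X \<and> biideal (B, H', R') Y \<and> (X \<noteq> {} \<longrightarrow> Y = B)"
  by (cases b)
     (auto simp: glue_unfold biideal_iff_Image Un_Image Image_map_prod_encl Image_map_prod_encr
       Image_encl_times_encr)

lemma biideals_glue:
  assumes "is_pp (B, H', R')"
  shows "{I. biideal (glue b (A, H, R) (B, H', R')) I} =
     (\<lambda>X. encl ` X \<union> encr ` B) ` {X. biideal (A, H, R) X} \<union> (`) encr ` {Y. biideal (B, H', R') Y}"
proof (intro set_eqI iffI)
  fix I assume I: "I \<in> {I. biideal (glue b (A, H, R) (B, H', R')) I}"
  define X Y where "X = encl -` I" and "Y = encr -` I"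
  have I_eq: "I = encl ` X \<union> encr ` Y"
    unfolding X_def Y_def by (rule enc_decompose)
  have "biideal (A, H, R) X" "biideal (B, H', R') Y" "X \<noteq> {} \<longrightarrow> Y = B"
    using I unfolding mem_Collect_eq I_eq biideal_glue_iff by simp_all
  then show "I \<in> (\<lambda>X. encl ` X \<union> encr ` B) ` {X. biideal (A, H, R) X} \<union> (`) encr ` {Y. biideal (B, H', R') Y}"
    unfolding I_eq by (cases "X = {}") auto
next
  fix I assume "I \<in> (\<lambda>X. encl ` X \<union> encr ` B) ` {X. biideal (A, H, R) X} \<union> (`) encr ` {Y. biideal (B, H', R') Y}"
  moreover have "biideal (A, H, R) {}" by (simp add: biideal_iff)
  moreover have "biideal (B, H', R') B"
    using is_pp_carrier[OF assms] by (auto simp: biideal_iff)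
  ultimately show "I \<in> {I. biideal (glue b (A, H, R) (B, H', R')) I}"
    using biideal_glue_iff[of b A H R B H' R' "{}"] biideal_glue_iff[of b A H R B H' R' _ B] by auto
qed

lemma sum_biideals_glue:
  fixes f :: "nat set \<Rightarrow> 'a::ab_group_add"
  assumes X: "is_pp (A, H, R)" and Y: "is_pp (B, H', R')"
  shows "(\<Sum>I\<in>{I. biideal (glue b (A, H, R) (B, H', R')) I}. f I)
       = (\<Sum>X\<in>{X. biideal (A, H, R) X}. f (encl ` X \<union> encr ` B))
       + (\<Sum>Y\<in>{Y. biideal (B, H', R') Y}. f (encr ` Y)) - f (encr ` B)"
proof -
  let ?L = "(\<lambda>X. encl ` X \<union> encr ` B) ` {X. biideal (A, H, R) X}"
  let ?R = "(`) encr ` {Y. biideal (B, H', R') Y}"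
  have inj_L: "inj_on (\<lambda>X. encl ` X \<union> encr ` B) {X. biideal (A, H, R) X}"
  proof (rule inj_onI)
    fix X X' assume "encl ` X \<union> encr ` B = encl ` X' \<union> encr ` B"
    then have "encl -` (encl ` X \<union> encr ` B) = encl -` (encl ` X' \<union> encr ` B)" by (rule arg_cong)
    then show "X = X'" by simp
  qed
  have inj_R: "inj_on ((`) encr) {Y. biideal (B, H', R') Y}"
    by (rule inj_onI) (simp add: inj_image_eq_iff[OF inj_encr])
  have "biideal (A, H, R) {}" "biideal (B, H', R') B"
    using is_pp_carrier[OF Y] unfolding biideal_iff by blast+
  then have in_both: "encr ` B \<in> ?L" "encr ` B \<in> ?R"
    by (auto intro!: image_eqI[where x = "{}"])
  have common: "J = encr ` B" if L: "J \<in> ?L" and R: "J \<in> ?R" for J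
  proof -
    obtain X Y where J: "J = encl ` X \<union> encr ` B" "J = encr ` Y" using L R by blast
    have "X = encl -` J" unfolding J(1) by simp
    also have "\<dots> = {}" unfolding J(2) by simp
    finally show ?thesis using J(1) by simp
  qed
  have overlap: "?L \<inter> ?R = {encr ` B}"
  proof (intro equalityI subsetI)
    fix J assume "J \<in> ?L \<inter> ?R"
    then show "J \<in> {encr ` B}" using common by simp
  qed (use in_both in simp)
  have "(\<Sum>I\<in>?L \<union> ?R. f I) + (\<Sum>I\<in>?L \<inter> ?R. f I) = (\<Sum>I\<in>?L. f I) + (\<Sum>I\<in>?R. f I)"
    by (rule sum.union_inter) (simp_all add: finite_biideals[OF X] finite_biideals[OF Y])
  then show ?thesis
    unfolding biideals_glue[OF Y] overlap sum.reindex[OF inj_L] sum.reindex[OF inj_R] comp_def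
    by (simp add: algebra_simps)
qed

section \<open>The coproduct of a product\<close>

lemma delta_raw_glue:
  fixes q :: "'k::field"
  assumes X: "is_pp (A, H, R)" and Y: "is_pp (B, H', R')"
  shows "delta_raw q (glue b (A, H, R) (B, H', R')) =
    (\<Sum>I\<in>{I. biideal (A, H, R) I}. Poly_Mapping.single
        (pp_class (pp_restrict (A, H, R) (A - I)), pp_class (glue b (pp_restrict (A, H, R) I) (B, H', R')))
        (q ^ (if b then card (A - I) * card B else 0) * q ^ hcount (A, H, R) (A - I) I))
  + (\<Sum>I\<in>{I. biideal (B, H', R') I}. Poly_Mapping.single
        (pp_class (glue b (A, H, R) (pp_restrict (B, H', R') (B - I))), pp_class (pp_restrict (B, H', R') I))
        (q ^ (if b then card A * card I else 0) * q ^ hcount (B, H', R') (B - I) I))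
  - Poly_Mapping.single (pp_class (A, H, R), pp_class (B, H', R')) (q ^ (if b then card A * card B else 0))"
proof -
  let ?G = "glue b (A, H, R) (B, H', R')"
  have carrier: "fst ?G = encl ` A \<union> encr ` B" by (simp add: glue_unfold)
  have restrict_A: "pp_restrict (A, H, R) A = (A, H, R)"
    and restrict_B: "pp_restrict (B, H', R') B = (B, H', R')"
    using pp_restrict_carrier X Y by blast+
  have complement_L: "fst ?G - (encl ` I \<union> encr ` B) = encl ` (A - I)"
    and complement_R: "fst ?G - encr ` J = encl ` A \<union> encr ` (B - J)" for I J
    unfolding carrier by auto
  have restrict_L: "pp_restrict ?G (encl ` I \<union> encr ` B) = glue b (pp_restrict (A, H, R) I) (B, H', R')"
    and hcount_L: "hcount ?G (encl ` (A - I)) (encl ` I \<union> encr ` B)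
      = hcount (A, H, R) (A - I) I + (if b then card (A - I) * card B else 0)"
    if "biideal (A, H, R) I" for I
    using pp_restrict_glue[OF _ order_refl] restrict_B
      hcount_glue[OF X Y Diff_subset _ empty_subsetI order_refl] biideal_subset[OF that] by simp_all
  have restrict_R: "pp_restrict ?G (encl ` A \<union> encr ` (B - J)) = glue b (A, H, R) (pp_restrict (B, H', R') (B - J))"
    and hcount_R: "hcount ?G (encl ` A \<union> encr ` (B - J)) (encr ` J)
      = (if b then card A * card J else 0) + hcount (B, H', R') (B - J) J"
    if "biideal (B, H', R') J" for J
    using pp_restrict_glue[OF order_refl Diff_subset] restrict_A
      hcount_glue[OF X Y order_refl empty_subsetI Diff_subset _] biideal_subset[OF that] by simp_all
  have class_L: "pp_class (pp_restrict ?G (encl ` (A - I))) = pp_class (pp_restrict (A, H, R) (A - I))" for I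
    by (rule pp_class_restrict_encl) blast
  have class_R: "pp_class (pp_restrict ?G (encr ` J)) = pp_class (pp_restrict (B, H', R') J)"
    if "biideal (B, H', R') J" for J
    using biideal_subset[OF that] by (intro pp_class_restrict_encr) simp
  have overlap: "pp_class (pp_restrict ?G (encl ` A)) = pp_class (A, H, R)"
    "pp_class (pp_restrict ?G (encr ` B)) = pp_class (B, H', R')"
    "hcount ?G (encl ` A) (encr ` B) = (if b then card A * card B else 0)"
    using class_L[of "{}"] pp_class_restrict_encr[OF order_refl] restrict_A restrict_B
      hcount_glue[OF X Y order_refl empty_subsetI empty_subsetI order_refl] by simp_all
  show ?thesis
    unfolding delta_raw_def sum_biideals_glue[OF X Y] complement_L complement_R
    by (intro arg_cong2[where f = "(-)"] arg_cong2[where f = "(+)"] sum.cong refl)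
       (simp_all add: restrict_L hcount_L restrict_R hcount_R class_L class_R overlap power_add mult.commute)
qed

lemma delta_glue:
  fixes q :: "'k::field" and b :: bool
  assumes x: "x \<in> PP" and y: "y \<in> PP"
  defines "mul \<equiv> \<lambda>u v. pp_class (glue b (pp_rep u) (pp_rep v))"
  shows "delta q (mul x y) =
      tens_rmul (\<lambda>a _. q ^ (if b then pp_card a * pp_card y else 0)) mul (delta q x) y
    + tens_lmul (\<lambda>_ c. q ^ (if b then pp_card x * pp_card c else 0)) mul x (delta q y)
    - Poly_Mapping.single (x, y) (q ^ (if b then pp_card x * pp_card y else 0))"
proof -
  obtain A H R B H' R' where X: "pp_rep x = (A, H, R)" and Y: "pp_rep y = (B, H', R')"
    by (cases "pp_rep x"; cases "pp_rep y")
  have ppX: "is_pp (A, H, R)" and ppY: "is_pp (B, H', R')"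
    using is_pp_rep[OF x] is_pp_rep[OF y] X Y by simp_all
  have cx: "pp_class (A, H, R) = x" and cy: "pp_class (B, H', R') = y"
    using pp_class_rep[OF x] pp_class_rep[OF y] X Y by simp_all
  have card_x: "pp_card x = card A" and card_y: "pp_card y = card B"
    unfolding pp_card_def X Y by simp_all
  have mul_class: "mul (pp_class P) (pp_class Q) = pp_class (glue b P Q)" if "is_pp P" "is_pp Q" for P Q
    unfolding mul_def
    by (rule pp_class_eqI, rule pp_iso_glue) (rule pp_iso_sym, rule pp_iso_rep_class, fact)+
  have mul_x: "mul x (pp_class Q) = pp_class (glue b (A, H, R) Q)"
    and mul_y: "mul (pp_class Q) y = pp_class (glue b Q (B, H', R'))" if "is_pp Q" for Q
    using mul_class[OF ppX that] mul_class[OF that ppY] cx cy by simp_all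
  have "tens_rmul (\<lambda>a _. q ^ (if b then pp_card a * pp_card y else 0)) mul (delta q x) y
    = (\<Sum>I\<in>{I. biideal (A, H, R) I}. Poly_Mapping.single
        (pp_class (pp_restrict (A, H, R) (A - I)), pp_class (glue b (pp_restrict (A, H, R) I) (B, H', R')))
        (q ^ (if b then card (A - I) * card B else 0) * q ^ hcount (A, H, R) (A - I) I))"
    unfolding delta_def X delta_raw_def tens_rmul_sum_single[OF finite_biideals[OF ppX]]
    by (intro sum.cong refl)
       (auto simp: mul_y card_y pp_card_class is_pp_restrict[OF ppX] dest!: biideal_subset)
  moreover have "tens_lmul (\<lambda>_ c. q ^ (if b then pp_card x * pp_card c else 0)) mul x (delta q y)
    = (\<Sum>I\<in>{I. biideal (B, H', R') I}. Poly_Mapping.single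
        (pp_class (glue b (A, H, R) (pp_restrict (B, H', R') (B - I))), pp_class (pp_restrict (B, H', R') I))
        (q ^ (if b then card A * card I else 0) * q ^ hcount (B, H', R') (B - I) I))"
    unfolding delta_def Y delta_raw_def tens_lmul_sum_single[OF finite_biideals[OF ppY]]
    by (intro sum.cong refl)
       (auto simp: mul_x card_x pp_card_class is_pp_restrict[OF ppY] dest!: biideal_subset)
  moreover have "delta q (mul x y) = delta_raw q (glue b (A, H, R) (B, H', R'))"
    using mul_class[OF ppX ppY] delta_class[OF is_pp_glue[OF ppX ppY]] cx cy by simp
  ultimately show ?thesis
    unfolding delta_raw_glue[OF ppX ppY] cx cy card_x card_y by simp
qed

lemma delta_pp_m:
  fixes q :: "'k::field"
  assumes "x \<in> PP" "y \<in> PP"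
  shows "delta q (pp_m x y) =
      tens_rmul (\<lambda>_ _. 1) pp_m (delta q x) y + tens_lmul (\<lambda>_ _. 1) pp_m x (delta q y)
    - Poly_Mapping.single (x, y) 1"
proof -
  have pp_m_eq: "pp_m = (\<lambda>u v. pp_class (glue False (pp_rep u) (pp_rep v)))"
    by (simp add: fun_eq_iff pp_m_def pp_m_raw_eq_glue)
  show ?thesis
    unfolding pp_m_eq using delta_glue[OF assms, of q False] by simp
qed

lemma delta_pp_tri:
  fixes q :: "'k::field"
  assumes "x \<in> PP" "y \<in> PP"
  shows "delta q (pp_tri x y) =
      tens_rmul (\<lambda>a _. q ^ (pp_card a * pp_card y)) pp_tri (delta q x) y
    + tens_lmul (\<lambda>_ c. q ^ (pp_card x * pp_card c)) pp_tri x (delta q y)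
    - Poly_Mapping.single (x, y) (q ^ (pp_card x * pp_card y))"
proof -
  have pp_tri_eq: "pp_tri = (\<lambda>u v. pp_class (glue True (pp_rep u) (pp_rep v)))"
    by (simp add: fun_eq_iff pp_tri_def pp_tri_raw_eq_glue)
  show ?thesis
    unfolding pp_tri_eq using delta_glue[OF assms, of q True] by simp
qed

theorem theorem7:
  fixes q :: "'k::field"
  shows "(\<forall>v :: ppc \<Rightarrow>\<^sub>0 'k. Poly_Mapping.keys v \<subseteq> PP \<longrightarrow>
            delta_tensor_id (delta q) (delta_lin q v) = id_tensor_delta (delta q) (delta_lin q v))
       \<and> (\<forall>x \<in> PP. \<forall>y \<in> PP.
            delta q (pp_m x y) =
              tens_rmul (\<lambda>_ _. 1) pp_m (delta q x) y
              + tens_lmul (\<lambda>_ _. 1) pp_m x (delta q y)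
              - Poly_Mapping.single (x, y) 1)
       \<and> (\<forall>x \<in> PP. \<forall>y \<in> PP.
            delta q (pp_tri x y) =
              tens_rmul (\<lambda>a b. q ^ (pp_card a * pp_card y)) pp_tri (delta q x) y
              + tens_lmul (\<lambda>a b. q ^ (pp_card x * pp_card b)) pp_tri x (delta q y)
              - Poly_Mapping.single (x, y) (q ^ (pp_card x * pp_card y)))"
  using delta_coassoc delta_pp_m delta_pp_tri by blast

end
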